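(* There is an absolute constant $C>0$ such that the following holds. Let $0<\delta\le\frac14$, $0<a<\pi$, $\lambda\ge1$, $M\ge1$, $0<\kappa\le1$, and $0\le\mu<1-\delta$. Let $g$ be a continuous function on the closed unit disk, analytic on its interior, satisfying $|g(\delta)|\ge\kappa$ and, for every $0<\gamma\le1-\delta$, $|z|\le1-\gamma\Rightarrow|g(z)|\le\frac{\lambda M}{\gamma}$. Let $\Gamma_\mu$ be the circle with center $\delta$ and radius $1-\delta-\mu$, and let $P$ be the closed arc of $\Gamma_\mu$ that is symmetric with respect to the real axis, has midpoint $1-\mu$, and has arc length $a$. Then $$\max_{z\in P}|g(z)|\ge\left(\frac{\delta\kappa}{\lambda M}\right)^{C/a}.$$
   Context: The paper writes the bound as $(\delta\kappa/(\lambda M))^{O(1/a)}$, where $O(\cdot)$ hides an absolute constant. *)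

theory Defs
  imports "HOL-Analysis.Analysis"
begin

text \<open>The closed arc of Gamma_mu symmetric w.r.t. the real axis, with midpoint
  delta + r = 1 - mu and arc length a, consists of the points
  delta + r e^{i t} with |t| \<le> a / (2 r).\<close>
definition arcP :: "real \<Rightarrow> real \<Rightarrow> real \<Rightarrow> complex set" where
  "arcP \<delta> \<mu> a =
     (let r = 1 - \<delta> - \<mu> in
      {complex_of_real \<delta> + complex_of_real r * cis t | t. \<bar>t\<bar> \<le> a / (2 * r)})"

end

theory Submission
  imports Defs "HOL-Complex_Analysis.Complex_Analysis"
begin

(* Put r = 1 - delta - mu, K = lambda M and n = floor (2 pi r / a) + 1, so that n a >= 2 pi r
   and n - 1 <= 2 pi / a.  The weighted function G(v) = g(delta + v) (v - r)^2 is holomorphic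
   on |v| < r.  A point delta + v with |v| = r lies at distance about delta |v - r|^2 / r
   inside the unit circle, so the growth condition gives |G| <= 2 K r / delta on |v| = r.
   The n rotations of a point of that circle by the n-th roots of unity are 2 pi / n <= a / r
   apart in angle, hence one of them lands on the arc P, where |G| <= 4 r^2 max_P |g|.  The
   maximum modulus principle for the product of G over the n rotations yields
   (|g(delta)| r^2)^n <= 4 r^2 max_P |g| (2 K r / delta)^(n-1), which rearranges to
   max_P |g| >= (delta kappa / K)^(7 pi / a). *)

definition boundary_growth_le :: "(complex \<Rightarrow> complex) \<Rightarrow> real \<Rightarrow> real \<Rightarrow> bool" where
  "boundary_growth_le g \<delta> K \<longleftrightarrow>
     (\<forall>\<gamma>. 0 < \<gamma> \<and> \<gamma> \<le> 1 - \<delta> \<longrightarrow> (\<forall>z. norm z \<le> 1 - \<gamma> \<longrightarrow> norm (g z) \<le> K / \<gamma>))"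

lemma norm_add_circle_point_sq:
  fixes v :: complex
  assumes "norm v = r" "0 < r"
  shows "norm (of_real \<delta> + v)^2 = (\<delta> + r)^2 - \<delta> * norm (v - of_real r)^2 / r"
proof -
  have circ: "(Re v)^2 + (Im v)^2 = r^2"
    using assms(1) cmod_power2 by metis
  have "norm (v - of_real r)^2 = (Re v - r)^2 + (Im v)^2"
    by (simp add: cmod_power2)
  also have "\<dots> = 2 * r * (r - Re v)"
    using circ by (simp add: power2_eq_square algebra_simps)
  finally have "\<delta> * norm (v - of_real r)^2 / r = 2 * \<delta> * (r - Re v)"
    using assms(2) by simp
  moreover have "norm (of_real \<delta> + v)^2 = (\<delta> + Re v)^2 + (Im v)^2"
    by (simp add: cmod_power2)
  ultimately show ?thesis
    using circ by (simp add: power2_eq_square algebra_simps)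
qed

lemma norm_add_circle_point_le:
  fixes v :: complex
  assumes "0 \<le> \<delta>" "0 < r" "\<delta> + r \<le> 1" "norm v = r"
  shows "norm (of_real \<delta> + v) \<le> 1 - \<delta> * norm (v - of_real r)^2 / (2 * r)"
proof -
  define \<gamma> where "\<gamma> = \<delta> * norm (v - of_real r)^2 / (2 * r)"
  have "(\<delta> + r)^2 \<le> 1"
    using assms by (simp add: power_le_one)
  then have sq: "norm (of_real \<delta> + v)^2 \<le> 1 - 2 * \<gamma>"
    using norm_add_circle_point_sq[OF assms(4,2)] by (simp add: \<gamma>_def)
  also have "\<dots> \<le> (1 - \<gamma>)^2"
    by (simp add: power2_eq_square algebra_simps)
  finally have "norm (of_real \<delta> + v)^2 \<le> (1 - \<gamma>)^2" .
  moreover have "0 \<le> 1 - \<gamma>"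
    using sq zero_le_power2[of "norm (of_real \<delta> + v)"] by linarith
  ultimately show ?thesis
    unfolding \<gamma>_def by (rule power2_le_imp_le)
qed

lemma norm_mult_dist_sq_le_of_boundary_growth:
  fixes g :: "complex \<Rightarrow> complex" and v :: complex
  assumes growth: "boundary_growth_le g \<delta> K" and "0 \<le> K"
    and "0 < \<delta>" "\<delta> \<le> 1/2" "0 < r" "\<delta> + r \<le> 1" "norm v = r"
  shows "norm (g (of_real \<delta> + v)) * norm (v - of_real r)^2 \<le> 2 * K * r / \<delta>"
proof (cases "v = of_real r")
  case True
  then show ?thesis using assms by simp
next
  case False
  define \<gamma> where "\<gamma> = \<delta> * norm (v - of_real r)^2 / (2 * r)"
  have "0 < \<gamma>"
    using False assms by (simp add: \<gamma>_def)
  have "norm (of_real \<delta> + v) \<le> 1 - \<gamma>"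
    unfolding \<gamma>_def using assms by (intro norm_add_circle_point_le) auto
  moreover have "2 * \<gamma> \<le> 1"
  proof -
    have "2 * \<gamma> \<le> (\<delta> + r)^2"
      using norm_add_circle_point_sq[of v r \<delta>] assms zero_le_power2[of "norm (of_real \<delta> + v)"]
      by (simp add: \<gamma>_def)
    also have "\<dots> \<le> 1"
      using assms by (simp add: power_le_one)
    finally show ?thesis .
  qed
  ultimately have "norm (g (of_real \<delta> + v)) \<le> K / \<gamma>"
    using growth \<open>0 < \<gamma>\<close> \<open>\<delta> \<le> 1/2\<close> unfolding boundary_growth_le_def by auto
  then have "norm (g (of_real \<delta> + v)) * norm (v - of_real r)^2 \<le> K / \<gamma> * norm (v - of_real r)^2"
    by (rule mult_right_mono) simp
  also have "\<dots> = 2 * K * r / \<delta>"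
    using False assms by (simp add: \<gamma>_def field_simps)
  finally show ?thesis .
qed

lemma ex_rotation_small_angle:
  fixes n :: nat
  assumes "0 < n"
  shows "\<exists>k<n. \<exists>t. \<bar>t\<bar> \<le> pi / n \<and> cis (2 * pi * k / n + \<phi>) = cis t"
proof -
  define s where "s = 2 * pi / n"
  have "0 < s"
    using assms by (simp add: s_def)
  define K where "K = \<lfloor>1/2 - \<phi> / s\<rfloor>"
  define t where "t = \<phi> + s * K"
  have "K \<le> 1/2 - \<phi> / s" "1/2 - \<phi> / s < K + 1"
    unfolding K_def by linarith+
  then have "s * K \<le> s / 2 - \<phi>" "s / 2 - \<phi> < s * K + s"
    using \<open>0 < s\<close> by (simp_all add: field_simps)
  then have "\<bar>t\<bar> \<le> s / 2"
    unfolding t_def by linarith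
  then have "\<bar>t\<bar> \<le> pi / n"
    by (simp add: s_def)
  define k where "k = nat (K mod int n)"
  have "k < n"
    using assms by (simp add: k_def nat_less_iff)
  have "int k = K mod int n"
    using assms by (simp add: k_def)
  also have "\<dots> = K - K div int n * int n"
    by (simp add: minus_div_mult_eq_mod)
  finally have k_eq: "real k = K - (K div int n) * real n"
    by (metis of_int_diff of_int_mult of_int_of_nat_eq)
  have "2 * pi * k / n + \<phi> = t + 2 * pi * real_of_int (- (K div int n))"
    unfolding k_eq t_def s_def using assms by (simp add: field_simps)
  then have "cis (2 * pi * k / n + \<phi>) = cis t"
    by (simp add: cis_mult [symmetric] del: of_int_minus)
  with \<open>k < n\<close> \<open>\<bar>t\<bar> \<le> pi / n\<close> show ?thesis
    by blast
qed

lemma ex_rotation_into_arcP: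
  fixes w :: complex and n :: nat and a :: real
  assumes "0 < n" "0 < 1 - \<delta> - \<mu>" "2 * pi * (1 - \<delta> - \<mu>) \<le> a * n"
    and "norm w = 1 - \<delta> - \<mu>"
  shows "\<exists>k<n. of_real \<delta> + cis (2 * pi * k / n) * w \<in> arcP \<delta> \<mu> a"
proof -
  define r where "r = 1 - \<delta> - \<mu>"
  obtain k t where "k < n" "\<bar>t\<bar> \<le> pi / n" and kt: "cis (2 * pi * k / n + Arg w) = cis t"
    using ex_rotation_small_angle[OF \<open>0 < n\<close>] by blast
  have "pi / n \<le> a / (2 * r)"
    using assms by (simp add: r_def field_simps)
  have "w = of_real r * cis (Arg w)"
    using rcis_cmod_Arg[of w] assms(4) by (simp add: rcis_def r_def)
  then have "cis (2 * pi * k / n) * w = of_real r * cis t"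
    by (metis kt cis_mult mult.left_commute)
  with \<open>k < n\<close> \<open>\<bar>t\<bar> \<le> pi / n\<close> \<open>pi / n \<le> a / (2 * r)\<close> show ?thesis
    unfolding arcP_def Let_def r_def by fastforce
qed

lemma ex_rotation_norm_on_arcP_le:
  fixes g :: "complex \<Rightarrow> complex" and w :: complex and n :: nat and \<delta> \<mu> a :: real
  defines "r \<equiv> 1 - \<delta> - \<mu>"
  assumes m: "\<And>z. z \<in> arcP \<delta> \<mu> a \<Longrightarrow> norm (g z) \<le> m"
    and "0 < n" "0 < r" "2 * pi * r \<le> a * n" and w: "norm w = r"
  shows "\<exists>k<n. norm (g (of_real \<delta> + cis (2 * pi * k / n) * w))
                * norm (cis (2 * pi * k / n) * w - of_real r)^2 \<le> 4 * r^2 * m"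
proof -
  obtain k where "k < n" and arc: "of_real \<delta> + cis (2 * pi * k / n) * w \<in> arcP \<delta> \<mu> a"
    using ex_rotation_into_arcP[of n \<delta> \<mu> a w] assms unfolding r_def by auto
  define u where "u = cis (2 * pi * k / n) * w"
  have "norm u = r"
    using w by (simp add: u_def norm_mult)
  then have "norm (u - of_real r) \<le> 2 * r"
    using norm_triangle_ineq4[of u "of_real r"] \<open>0 < r\<close> by simp
  then have "norm (u - of_real r)^2 \<le> (2 * r)^2"
    by (rule power_mono) simp
  moreover have "norm (g (of_real \<delta> + u)) \<le> m"
    using m arc by (simp add: u_def)
  ultimately have "norm (g (of_real \<delta> + u)) * norm (u - of_real r)^2 \<le> m * (2 * r)^2"
    by (intro mult_mono) (auto intro: order_trans[OF norm_ge_zero])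
  then show ?thesis
    using \<open>k < n\<close> by (auto simp: u_def power_mult_distrib algebra_simps)
qed

lemma holomorphic_on_translate_ball:
  fixes g :: "complex \<Rightarrow> complex"
  assumes "g holomorphic_on ball 0 1" "norm t + r \<le> 1"
  shows "(\<lambda>v. g (t + v)) holomorphic_on ball 0 r"
proof -
  have "(+) t ` ball 0 r \<subseteq> ball 0 1"
    using assms by (simp add: ball_subset_ball_iff)
  then have "(g \<circ> (+) t) holomorphic_on ball 0 r"
    by (intro holomorphic_on_compose_gen[OF _ assms(1)] holomorphic_intros)
  then show ?thesis
    by (simp add: o_def)
qed

lemma continuous_on_translate_cball:
  fixes g :: "complex \<Rightarrow> complex"
  assumes "continuous_on (cball 0 1) g" "norm t + r \<le> 1"
  shows "continuous_on (cball 0 r) (\<lambda>v. g (t + v))"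
proof -
  have "(+) t ` cball 0 r \<subseteq> cball 0 1"
    using assms by (simp add: cball_subset_cball_iff)
  then show ?thesis
    by (intro continuous_on_compose2[OF assms(1)] continuous_intros)
qed

lemma norm_power_le_of_rotations:
  fixes G :: "complex \<Rightarrow> complex" and c :: "nat \<Rightarrow> complex"
  assumes "0 < r"
    and holo: "G holomorphic_on ball 0 r" and cont: "continuous_on (cball 0 r) G"
    and unit: "\<And>k. k < n \<Longrightarrow> norm (c k) = 1"
    and bound: "\<And>v. norm v = r \<Longrightarrow> norm (G v) \<le> B"
    and good: "\<And>w. norm w = r \<Longrightarrow> \<exists>k<n. norm (G (c k * w)) \<le> m"
  shows "norm (G 0) ^ n \<le> m * B ^ (n - 1)"
proof -
  define h where "h w = (\<Prod>k<n. G (c k * w))" for w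
  have rotate: "norm (c k * w) = norm w" if "k < n" for k w
    using unit[OF that] by (simp add: norm_mult)
  have "h holomorphic_on ball 0 r"
    unfolding h_def
  proof (intro holomorphic_on_prod)
    fix k assume "k \<in> {..<n}"
    then have "(*) (c k) ` ball 0 r \<subseteq> ball 0 r"
      using rotate by auto
    then show "(\<lambda>w. G (c k * w)) holomorphic_on ball 0 r"
      using holomorphic_on_compose_gen[OF _ holo, of "(*) (c k)"]
      by (auto simp: o_def intro: holomorphic_intros)
  qed
  moreover have "continuous_on (cball 0 r) h"
    unfolding h_def
  proof (intro continuous_on_prod)
    fix k assume "k \<in> {..<n}"
    then have "(*) (c k) ` cball 0 r \<subseteq> cball 0 r"
      using rotate by auto
    then show "continuous_on (cball 0 r) (\<lambda>w. G (c k * w))"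
      by (intro continuous_on_compose2[OF cont]) (auto intro: continuous_intros)
  qed
  moreover have "norm (h w) \<le> m * B ^ (n - 1)" if "norm w = r" for w
  proof -
    obtain k0 where "k0 < n" and k0: "norm (G (c k0 * w)) \<le> m"
      using good[OF \<open>norm w = r\<close>] by blast
    have Bk: "norm (G (c k * w)) \<le> B" if "k < n" for k
      using bound rotate \<open>k < n\<close> \<open>norm w = r\<close> by simp
    have "norm (h w) = norm (G (c k0 * w)) * (\<Prod>k\<in>{..<n} - {k0}. norm (G (c k * w)))"
      using \<open>k0 < n\<close> by (simp add: h_def prod_norm prod.remove norm_mult)
    also have "\<dots> \<le> m * (\<Prod>k\<in>{..<n} - {k0}. B)"
      using k0 Bk by (intro mult_mono prod_mono) (auto simp: prod_nonneg order_trans[OF norm_ge_zero k0])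
    also have "\<dots> = m * B ^ (n - 1)"
      using \<open>k0 < n\<close> by (simp add: card_Diff_singleton)
    finally show ?thesis .
  qed
  ultimately have "norm (h 0) \<le> m * B ^ (n - 1)"
    using maximum_modulus_frontier[of h "cball 0 r"] \<open>0 < r\<close> by auto
  then show ?thesis
    by (simp add: h_def norm_power)
qed

lemma arcP_eq_image:
  "arcP \<delta> \<mu> a = (\<lambda>t. of_real \<delta> + of_real (1 - \<delta> - \<mu>) * cis t) `
     {- (a / (2 * (1 - \<delta> - \<mu>))) .. a / (2 * (1 - \<delta> - \<mu>))}"
  unfolding arcP_def Let_def by (auto simp: abs_le_iff)

lemma ex_max_norm_on_arcP:
  fixes g :: "complex \<Rightarrow> complex"
  assumes cont: "continuous_on (cball 0 1) g"
    and "0 \<le> \<delta>" "0 \<le> \<mu>" "\<mu> \<le> 1 - \<delta>" "0 \<le> a"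
  obtains z where "z \<in> arcP \<delta> \<mu> a" "\<And>w. w \<in> arcP \<delta> \<mu> a \<Longrightarrow> norm (g w) \<le> norm (g z)"
proof -
  define r where "r = 1 - \<delta> - \<mu>"
  have "0 \<le> r"
    using assms by (simp add: r_def)
  have arc: "arcP \<delta> \<mu> a = {of_real \<delta> + of_real r * cis t | t. \<bar>t\<bar> \<le> a / (2 * r)}"
    unfolding arcP_def r_def by simp
  have "compact (arcP \<delta> \<mu> a)"
    unfolding arcP_eq_image by (intro compact_continuous_image continuous_intros) auto
  moreover have "of_real \<delta> + of_real r \<in> arcP \<delta> \<mu> a"
    unfolding arc using \<open>0 \<le> r\<close> \<open>0 \<le> a\<close> by (auto intro!: exI[of _ 0])
  moreover have "arcP \<delta> \<mu> a \<subseteq> cball 0 1"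
  proof
    fix z assume "z \<in> arcP \<delta> \<mu> a"
    then obtain t where z: "z = of_real \<delta> + of_real r * cis t"
      unfolding arc by blast
    have "norm z \<le> norm (of_real \<delta> :: complex) + norm (of_real r * cis t)"
      unfolding z by (rule norm_triangle_ineq)
    also have "\<dots> = \<delta> + r"
      using assms \<open>0 \<le> r\<close> by (simp add: norm_mult)
    finally show "z \<in> cball 0 1"
      using assms by (simp add: r_def)
  qed
  then have "continuous_on (arcP \<delta> \<mu> a) (\<lambda>z. norm (g z))"
    by (intro continuous_intros continuous_on_subset[OF cont])
  ultimately obtain z where "z \<in> arcP \<delta> \<mu> a" "\<forall>w\<in>arcP \<delta> \<mu> a. norm (g w) \<le> norm (g z)"
    using continuous_attains_sup[of "arcP \<delta> \<mu> a" "\<lambda>z. norm (g z)"] by blast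
  then show ?thesis
    using that by blast
qed

lemma exp_neg_le_power:
  fixes r D :: real and N :: nat
  assumes "0 < r" "r \<le> 1" "0 \<le> D" "real N \<le> D * r"
  shows "exp (- D) \<le> r ^ N"
proof -
  have "- ln r \<le> 1 / r - 1"
    using ln_le_minus_one[of "1 / r"] assms by (simp add: ln_div)
  then have "- 1 \<le> r * ln r"
    using assms by (simp add: field_simps)
  then have "- D \<le> D * r * ln r"
    using mult_left_mono[of "- 1" "r * ln r" D] assms by simp
  also have "\<dots> \<le> real N * ln r"
    using assms by (intro mult_right_mono_neg) auto
  finally have "exp (- D) \<le> exp (real N * ln r)"
    by simp
  also have "\<dots> = r ^ N"
    using assms by (simp add: exp_of_nat_mult)
  finally show ?thesis .
qed

lemma mult_powr_le_power_bound:
  fixes \<kappa> y r D :: real and N :: nat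
  assumes "0 < \<kappa>" and y: "0 < y" "y \<le> 1" and "\<kappa> * y \<le> 1/4"
    and r: "0 < r" "r \<le> 1" and "2 \<le> D" and N: "real N \<le> D * r"
  shows "(\<kappa> * y) powr (3 * D + 1) \<le> \<kappa> ^ (N + 1) * (y * r / 2) ^ N / 4"
proof -
  define x where "x = \<kappa> * y"
  have x: "0 < x" "x \<le> 1/4"
    using assms by (simp_all add: x_def)
  have "real N \<le> D"
    using N r \<open>2 \<le> D\<close> mult_left_le[of r D] by linarith
  have "x powr (D + 1) \<le> x powr (N + 1)"
    using x \<open>real N \<le> D\<close> by (intro powr_mono') auto
  also have "\<dots> = \<kappa> ^ (N + 1) * y ^ (N + 1)"
    using x by (simp add: powr_realpow x_def power_mult_distrib del: of_nat_Suc)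
  also have "\<dots> \<le> \<kappa> ^ (N + 1) * y ^ N"
    using \<open>0 < \<kappa>\<close> y by (intro mult_left_mono) (auto simp: power_le_one)
  finally have 1: "x powr (D + 1) \<le> \<kappa> ^ (N + 1) * y ^ N" .
  have "x powr (D / 2) \<le> (1/4) powr (D / 2)"
    using x \<open>2 \<le> D\<close> by (intro powr_mono2) auto
  also have "\<dots> = (1/2) powr D"
  proof -
    have quarter: "(1/4::real) = (1/2) powr 2"
      by (simp add: powr_numeral power2_eq_square)
    show ?thesis
      unfolding quarter powr_powr by simp
  qed
  also have "\<dots> \<le> (1/2) powr N"
    using \<open>real N \<le> D\<close> by (intro powr_mono') auto
  finally have 2: "x powr (D / 2) \<le> (1/2) ^ N"
    by (simp add: powr_realpow)
  have "x * exp 1 \<le> 1/4 * 4"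
    using x exp_le by (intro mult_mono) auto
  then have "x \<le> exp (- 1)"
    by (simp add: exp_minus field_simps)
  then have "x powr D \<le> exp (- 1) powr D"
    using x \<open>2 \<le> D\<close> by (intro powr_mono2) auto
  also have "\<dots> \<le> r ^ N"
    using exp_neg_le_power[OF r _ N] \<open>2 \<le> D\<close> by (simp add: exp_powr_real)
  finally have 3: "x powr D \<le> r ^ N" .
  have "x powr (D / 2) \<le> x powr 1"
    using x \<open>2 \<le> D\<close> by (intro powr_mono') auto
  then have 4: "x powr (D / 2) \<le> 1/4"
    using x by simp
  have "x powr (3 * D + 1) = x powr (D + 1) * x powr (D / 2) * x powr D * x powr (D / 2)"
    by (simp add: powr_add [symmetric])
  also have "\<dots> \<le> (\<kappa> ^ (N + 1) * y ^ N) * (1/2) ^ N * r ^ N * (1/4)"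
    using 1 2 3 4 x \<open>0 < \<kappa>\<close> y r by (intro mult_mono) auto
  also have "\<dots> = \<kappa> ^ (N + 1) * (y * r / 2) ^ N / 4"
    by (simp add: power_mult_distrib power_divide)
  finally show ?thesis
    by (simp add: x_def)
qed

lemma norm_centre_power_le:
  fixes g :: "complex \<Rightarrow> complex" and \<delta> \<mu> K a :: real and n :: nat
  defines "r \<equiv> 1 - \<delta> - \<mu>" and "q \<equiv> \<delta> * (1 - \<delta> - \<mu>) / (2 * K)"
  assumes \<delta>: "0 < \<delta>" "\<delta> \<le> 1/2" and "0 < K" and \<mu>: "0 \<le> \<mu>" "\<mu> < 1 - \<delta>"
    and cont: "continuous_on (cball 0 1) g" and holo: "g holomorphic_on ball 0 1"
    and growth: "boundary_growth_le g \<delta> K"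
    and m: "\<And>z. z \<in> arcP \<delta> \<mu> a \<Longrightarrow> norm (g z) \<le> m"
    and n: "0 < n" "2 * pi * r \<le> a * n"
  shows "(q * norm (g \<delta>)) ^ n \<le> 4 * q * m"
proof -
  have r: "0 < r" "\<delta> + r \<le> 1"
    using \<mu> by (simp_all add: r_def)
  define c where "c = \<delta> / (2 * K * r)"
  have "0 < c"
    using \<delta> r \<open>0 < K\<close> by (simp add: c_def)
  \<comment> \<open>The weight vanishes where the circle of radius r about \<delta> comes closest to the unit
    circle, offsetting the growth of g there.\<close>
  define G where "G v = of_real c * g (of_real \<delta> + v) * (v - of_real r)^2" for v
  have norm_G: "norm (G v) = c * (norm (g (of_real \<delta> + v)) * norm (v - of_real r)^2)" for v
    using \<open>0 < c\<close> by (simp add: G_def norm_mult norm_power)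
  have "(\<lambda>v. g (of_real \<delta> + v)) holomorphic_on ball 0 r"
    "continuous_on (cball 0 r) (\<lambda>v. g (of_real \<delta> + v))"
    using holomorphic_on_translate_ball[OF holo] continuous_on_translate_cball[OF cont] \<delta> r
    by simp_all
  then have "G holomorphic_on ball 0 r" "continuous_on (cball 0 r) G"
    unfolding G_def by (auto intro!: holomorphic_intros continuous_intros)
  moreover have "norm (G v) \<le> 1" if "norm v = r" for v
  proof -
    have "norm (g (of_real \<delta> + v)) * norm (v - of_real r)^2 \<le> 2 * K * r / \<delta>"
      using norm_mult_dist_sq_le_of_boundary_growth[OF growth] \<delta> r \<open>0 < K\<close> that by simp
    then have "norm (G v) \<le> c * (2 * K * r / \<delta>)"
      unfolding norm_G by (rule mult_left_mono) (use \<open>0 < c\<close> in simp)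
    also have "\<dots> = 1"
      using \<delta> r \<open>0 < K\<close> by (simp add: c_def)
    finally show ?thesis .
  qed
  moreover have "\<exists>k<n. norm (G (cis (2 * pi * k / n) * w)) \<le> 4 * q * m" if "norm w = r" for w
  proof -
    obtain k where "k < n" and k: "norm (g (of_real \<delta> + cis (2 * pi * k / n) * w))
        * norm (cis (2 * pi * k / n) * w - of_real r)^2 \<le> 4 * r^2 * m"
      using ex_rotation_norm_on_arcP_le[where g = g and \<delta> = \<delta> and \<mu> = \<mu> and a = a, OF m]
        n r \<open>norm w = r\<close> unfolding r_def by blast
    have "norm (G (cis (2 * pi * k / n) * w)) \<le> c * (4 * r^2 * m)"
      unfolding norm_G using k by (rule mult_left_mono) (use \<open>0 < c\<close> in simp)
    also have "\<dots> = 4 * q * m"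
      using r \<open>0 < K\<close> by (simp add: c_def q_def r_def [symmetric] power2_eq_square)
    finally show ?thesis
      using \<open>k < n\<close> by blast
  qed
  ultimately have "norm (G 0) ^ n \<le> 4 * q * m * 1 ^ (n - 1)"
    using r by (intro norm_power_le_of_rotations[where c = "\<lambda>k. cis (2 * pi * k / n)"]) auto
  moreover have "norm (G 0) = q * norm (g \<delta>)"
    using r \<open>0 < K\<close> by (simp add: norm_G c_def q_def r_def [symmetric] power2_eq_square)
  ultimately show ?thesis
    by simp
qed

lemma norm_on_arcP_lower_bound:
  fixes g :: "complex \<Rightarrow> complex"
  assumes \<delta>: "0 < \<delta>" "\<delta> \<le> 1/4" and a: "0 < a" "a \<le> pi" and "1 \<le> K"
    and \<kappa>: "0 < \<kappa>" "\<kappa> \<le> 1" and \<mu>: "0 \<le> \<mu>" "\<mu> < 1 - \<delta>"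
    and cont: "continuous_on (cball 0 1) g" and holo: "g holomorphic_on ball 0 1"
    and "\<kappa> \<le> norm (g \<delta>)" and growth: "boundary_growth_le g \<delta> K"
    and m: "\<And>z. z \<in> arcP \<delta> \<mu> a \<Longrightarrow> norm (g z) \<le> m"
  shows "(\<delta> * \<kappa> / K) powr (7 * pi / a) \<le> m"
proof -
  define r where "r = 1 - \<delta> - \<mu>"
  have r: "0 < r" "r \<le> 1"
    using \<delta> \<mu> by (auto simp: r_def)
  define D where "D = 2 * pi / a"
  have "2 \<le> D" "0 < D * r"
    using a r by (simp_all add: D_def field_simps)
  define N where "N = nat \<lfloor>D * r\<rfloor>"
  have "real N = of_int \<lfloor>D * r\<rfloor>"
    using \<open>0 < D * r\<close> by (simp add: N_def)
  then have N: "real N \<le> D * r" "D * r \<le> N + 1"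
    by linarith+
  then have "2 * pi * r \<le> a * real (N + 1)"
    using a by (simp add: D_def field_simps)
  define y where "y = \<delta> / K"
  have y: "0 < y" "y \<le> 1"
    using \<delta> \<open>1 \<le> K\<close> by (auto simp: y_def)
  define q where "q = y * r / 2"
  have "0 < q"
    using y r by (simp add: q_def)
  have "(q * norm (g \<delta>)) ^ (N + 1) \<le> 4 * q * m"
    using norm_centre_power_le[OF _ _ _ \<mu> cont holo growth m, where n = "N + 1"] \<delta> \<open>1 \<le> K\<close>
      \<open>2 * pi * r \<le> a * real (N + 1)\<close>
    unfolding q_def y_def r_def by (simp add: mult.commute)
  moreover have "(\<kappa> * q) ^ (N + 1) \<le> (q * norm (g \<delta>)) ^ (N + 1)"
    using \<open>\<kappa> \<le> norm (g \<delta>)\<close> \<kappa> \<open>0 < q\<close> by (intro power_mono) (auto simp: mult.commute)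
  ultimately have "\<kappa> ^ (N + 1) * q ^ N * q \<le> 4 * m * q"
    by (simp add: power_mult_distrib mult.commute mult.left_commute)
  then have bound: "\<kappa> ^ (N + 1) * q ^ N / 4 \<le> m"
    using \<open>0 < q\<close> by simp
  have "\<kappa> * y \<le> y"
    using \<kappa> y by (intro mult_left_le_one_le) auto
  also have "\<dots> \<le> \<delta>"
    using \<delta> mult_left_mono[of 1 K \<delta>] \<open>1 \<le> K\<close> by (simp add: y_def divide_le_eq)
  finally have "\<kappa> * y \<le> 1/4"
    using \<delta> by simp
  then have "(\<kappa> * y) powr (3 * D + 1) \<le> \<kappa> ^ (N + 1) * q ^ N / 4"
    unfolding q_def using \<kappa> y r N \<open>2 \<le> D\<close> by (intro mult_powr_le_power_bound) auto
  moreover have "3 * D + 1 \<le> 7 * pi / a"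
    using a by (simp add: D_def field_simps)
  then have "(\<kappa> * y) powr (7 * pi / a) \<le> (\<kappa> * y) powr (3 * D + 1)"
    using \<kappa> y by (intro powr_mono') (auto intro: mult_le_one)
  ultimately show ?thesis
    using bound by (simp add: y_def mult.commute)
qed

lemma ex_point_on_arcP_norm_ge:
  fixes g :: "complex \<Rightarrow> complex"
  assumes "0 < \<delta>" "\<delta> \<le> 1/4" "0 < a" "a \<le> pi" "1 \<le> K"
    and "0 < \<kappa>" "\<kappa> \<le> 1" "0 \<le> \<mu>" "\<mu> < 1 - \<delta>"
    and cont: "continuous_on (cball 0 1) g" and "g holomorphic_on ball 0 1"
    and "\<kappa> \<le> norm (g \<delta>)" and "boundary_growth_le g \<delta> K"
  shows "\<exists>z\<in>arcP \<delta> \<mu> a. (\<delta> * \<kappa> / K) powr (7 * pi / a) \<le> norm (g z)"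
proof -
  have "0 \<le> \<delta>" "\<mu> \<le> 1 - \<delta>" "0 \<le> a"
    using assms by simp_all
  then obtain z where "z \<in> arcP \<delta> \<mu> a" "\<And>w. w \<in> arcP \<delta> \<mu> a \<Longrightarrow> norm (g w) \<le> norm (g z)"
    using ex_max_norm_on_arcP[OF cont] \<open>0 \<le> \<mu>\<close> by blast
  then show ?thesis
    using norm_on_arcP_lower_bound assms by blast
qed

theorem corollary5p6:
  "\<exists>C::real. C > 0 \<and>
    (\<forall>(\<delta>::real) (a::real) (lam::real) (M::real) (\<kappa>::real) (\<mu>::real) (g::complex \<Rightarrow> complex).
      0 < \<delta> \<and> \<delta> \<le> 1/4 \<and> 0 < a \<and> a < pi \<and> 1 \<le> lam \<and> 1 \<le> M \<and>
      0 < \<kappa> \<and> \<kappa> \<le> 1 \<and> 0 \<le> \<mu> \<and> \<mu> < 1 - \<delta> \<and>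
      continuous_on (cball 0 1) g \<and> g holomorphic_on ball 0 1 \<and>
      norm (g (complex_of_real \<delta>)) \<ge> \<kappa> \<and>
      (\<forall>\<gamma>::real. 0 < \<gamma> \<and> \<gamma> \<le> 1 - \<delta> \<longrightarrow>
         (\<forall>z. norm z \<le> 1 - \<gamma> \<longrightarrow> norm (g z) \<le> lam * M / \<gamma>))
      \<longrightarrow> (\<exists>z\<in>arcP \<delta> \<mu> a. norm (g z) \<ge> (\<delta> * \<kappa> / (lam * M)) powr (C / a)))"
proof -
  have "1 \<le> lam * M" if "1 \<le> lam" "1 \<le> M" for lam M :: real
    using that mult_mono[of 1 lam 1 M] by simp
  then show ?thesis
    unfolding boundary_growth_le_def [symmetric]
    by (intro exI[of _ "7 * pi"]) (auto intro!: ex_point_on_arcP_norm_ge)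
qed

end
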